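(* Let $H$ be the $3$-uniform hypergraph on vertex set $[6]$ with edges $\{1,2,3\},\{3,4,5\},\{1,5,6\}$. Then the $h$-vector of the coloring complex $\Delta_H$ is $(1,33,39,-1)$. Consequently there exist uniform hypergraphs $H$ such that $h(\Delta_H)$ has a negative entry and $\Delta_H$ is not partitionable.
   Context: The coloring complex $\Delta_H$ of a hypergraph $H=([n],E)$ is the abstract simplicial complex whose vertices are the nonempty proper subsets of $[n]$ and whose faces are the chains $\emptyset\neq A_1\subsetneq\cdots\subsetneq A_l\neq[n]$ ($l\ge0$) such that, with $A_0=\emptyset$, $A_{l+1}=[n]$, some difference $A_i\setminus A_{i-1}$ ($1\le i\le l+1$) contains an edge of $H$. For a $(d-1)$-dimensional complex with $f_i$ faces of dimension $i$ ($f_{-1}=1$), the $h$-vector $(h_0,\dots,h_d)$ is defined by $\sum_i h_i t^{d-i}=\sum_i f_{i-1}(t-1)^{d-i}$. A simplicial complex $\Delta$ with facets $F_1,\dots,F_m$ is partitionable if $\Delta=\bigsqcup_{j=1}^m[G_j,F_j]$ (disjoint union) for some faces $G_j\subseteq F_j$, where $[G,F]=\{K: G\subseteq K\subseteq F\}$. *)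

theory Defs
  imports "HOL-Computational_Algebra.Polynomial"
begin

definition hypergraph :: "nat \<Rightarrow> nat set set \<Rightarrow> bool" where
  "hypergraph n E \<longleftrightarrow> (\<forall>e\<in>E. e \<noteq> {} \<and> e \<subseteq> {1..n})"

definition uniform_hypergraph :: "nat \<Rightarrow> nat set set \<Rightarrow> bool" where
  "uniform_hypergraph n E \<longleftrightarrow> hypergraph n E \<and> (\<exists>k. \<forall>e\<in>E. card e = k)"

definition coloring_complex :: "nat \<Rightarrow> nat set set \<Rightarrow> nat set set set" where
  "coloring_complex n E = {C.
     C \<subseteq> {A. A \<noteq> {} \<and> A \<subset> {1..n}} \<and>
     (\<forall>A\<in>C. \<forall>B\<in>C. A \<subseteq> B \<or> B \<subseteq> A) \<and>
     (let C' = C \<union> {{}, {1..n}} in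
        \<exists>A\<in>C'. \<exists>B\<in>C'. A \<subset> B \<and> (\<forall>X\<in>C'. \<not> (A \<subset> X \<and> X \<subset> B)) \<and>
          (\<exists>e\<in>E. e \<subseteq> B - A))}"

text \<open>Number of faces with i elements, i.e. f_{i-1}.\<close>
definition fnum :: "'a set set \<Rightarrow> nat \<Rightarrow> nat" where
  "fnum \<Delta> i = card {F\<in>\<Delta>. card F = i}"

text \<open>d = dimension + 1 = maximal face cardinality.\<close>
definition cdim :: "'a set set \<Rightarrow> nat" where
  "cdim \<Delta> = Max (card ` \<Delta>)"

text \<open>sum_i h_i t^(d-i) = sum_i f_(i-1) (t-1)^(d-i)\<close>
definition hpoly :: "'a set set \<Rightarrow> int poly" where
  "hpoly \<Delta> = (\<Sum>i\<le>cdim \<Delta>. of_nat (fnum \<Delta> i) * [:-1, 1:] ^ (cdim \<Delta> - i))"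

definition hvector :: "'a set set \<Rightarrow> int list" where
  "hvector \<Delta> = map (\<lambda>i. coeff (hpoly \<Delta>) (cdim \<Delta> - i)) [0..<cdim \<Delta> + 1]"

definition facets :: "'a set set \<Rightarrow> 'a set set" where
  "facets \<Delta> = {F\<in>\<Delta>. \<forall>G\<in>\<Delta>. F \<subseteq> G \<longrightarrow> G = F}"

definition interval :: "'a set \<Rightarrow> 'a set \<Rightarrow> 'a set set" where
  "interval G F = {K. G \<subseteq> K \<and> K \<subseteq> F}"

definition partitionable :: "'a set set \<Rightarrow> bool" where
  "partitionable \<Delta> \<longleftrightarrow> (\<exists>g. (\<forall>F\<in>facets \<Delta>. g F \<in> \<Delta> \<and> g F \<subseteq> F) \<and>
     (\<Union>F\<in>facets \<Delta>. interval (g F) F) = \<Delta> \<and>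
     (\<forall>F1\<in>facets \<Delta>. \<forall>F2\<in>facets \<Delta>. F1 \<noteq> F2 \<longrightarrow>
        interval (g F1) F1 \<inter> interval (g F2) F2 = {}))"

end

theory Submission
  imports Defs
begin

(*
  If a complex is partitioned into Boolean intervals [G, F]
  over its facets and all facets have d elements, then every interval with
  G < F has alternating sum 0, so the alternating face sum sum_K (-1)^|K| is
  (-1)^d times the number of intervals [F, F]; in particular its product
  with (-1)^d is nonnegative.

  A face of the coloring complex is a chain, represented by
  its strictly decreasing list; for such lists the face condition says that
  some consecutive difference of [n] > A_1 > ... > A_l > {} contains an edge.

  Evaluation gives the f-numbers and shows that all faces have
  at most 3 elements; for every smaller face a strictly larger face is found
  among its one-point refinements, so the complex is pure of facet size 3.
  Its alternating face sum is 1 - 36 + 108 - 72 = 1, while a partitionable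
  such complex would have (-1)^3 * sum >= 0.
*)


section \<open>Alternating sums over simplicial complexes\<close>

lemma interval_alternating_sum:
  assumes "finite F" "G \<subset> F"
  shows "(\<Sum>K\<in>interval G F. (-1::int) ^ card K) = 0"
proof -
  have "interval G F = {K. K \<subseteq> F \<and> G \<subseteq> K}"
    unfolding interval_def by blast
  moreover have "finite {K. K \<subseteq> F \<and> G \<subseteq> K}"
    using assms(1) by simp
  ultimately show ?thesis
    using card_subsupersets_even_odd[OF assms] by (simp add: sum_alternating_cancels)
qed

text \<open>In a partitionable complex whose facets all have \<open>d\<close> elements, the alternating
  face sum has sign \<open>(-1)^d\<close>: only the intervals \<open>[F, F]\<close> contribute, each by \<open>(-1)^d\<close>.\<close>
lemma partitionable_pure_alternating_sum_sign:
  fixes \<Delta> :: "'a set set"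
  assumes part: "partitionable \<Delta>" and fin: "finite \<Delta>"
    and pure: "\<And>F. F \<in> facets \<Delta> \<Longrightarrow> finite F \<and> card F = d"
  shows "(-1) ^ d * (\<Sum>K\<in>\<Delta>. (-1::int) ^ card K) \<ge> 0"
proof -
  obtain g where g: "\<forall>F\<in>facets \<Delta>. g F \<in> \<Delta> \<and> g F \<subseteq> F"
    and cover: "(\<Union>F\<in>facets \<Delta>. interval (g F) F) = \<Delta>"
    and disj: "\<forall>F1\<in>facets \<Delta>. \<forall>F2\<in>facets \<Delta>. F1 \<noteq> F2 \<longrightarrow>
                 interval (g F1) F1 \<inter> interval (g F2) F2 = {}"
    using part unfolding partitionable_def by (elim exE conjE) (rule that)
  have fin_facets: "finite (facets \<Delta>)"
    using fin unfolding facets_def by simp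
  have fin_interval: "finite (interval (g F) F)" if "F \<in> facets \<Delta>" for F
  proof -
    have "interval (g F) F \<subseteq> Pow F" unfolding interval_def by blast
    then show ?thesis using pure[OF that] by (meson finite_Pow_iff finite_subset)
  qed
  have interval_sum: "(\<Sum>K\<in>interval (g F) F. (-1::int) ^ card K) = (if g F = F then (-1) ^ d else 0)"
    if F: "F \<in> facets \<Delta>" for F
  proof (cases "g F = F")
    case True
    then have "interval (g F) F = {F}" unfolding interval_def by auto
    then show ?thesis using True pure[OF F] by simp
  next
    case False
    then show ?thesis
      using interval_alternating_sum[of F "g F"] pure[OF F] g F by auto
  qed
  have "(\<Sum>K\<in>\<Delta>. (-1::int) ^ card K) = (\<Sum>K\<in>(\<Union>F\<in>facets \<Delta>. interval (g F) F). (-1) ^ card K)"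
    by (simp only: cover)
  also have "\<dots> = (\<Sum>F\<in>facets \<Delta>. \<Sum>K\<in>interval (g F) F. (-1) ^ card K)"
    by (rule sum.UNION_disjoint[OF fin_facets]) (use fin_interval disj in auto)
  also have "\<dots> = (\<Sum>F\<in>facets \<Delta>. if g F = F then (-1) ^ d else 0)"
    using interval_sum by simp
  also have "\<dots> = (\<Sum>F\<in>{F \<in> facets \<Delta>. g F = F}. (-1) ^ d)"
    by (rule sum.inter_filter[OF fin_facets, symmetric])
  finally have "(\<Sum>K\<in>\<Delta>. (-1::int) ^ card K) = (-1) ^ d * int (card {F \<in> facets \<Delta>. g F = F})"
    by simp
  moreover have "(-1::int) ^ d * (-1) ^ d = 1"
    by (simp flip: power_mult_distrib)
  ultimately show ?thesis
    by (simp flip: mult.assoc)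
qed

lemma alternating_sum_fnum:
  fixes \<Delta> :: "'a set set"
  assumes "finite \<Delta>" "\<Delta> \<noteq> {}"
  shows "(\<Sum>K\<in>\<Delta>. (-1::int) ^ card K) = (\<Sum>i\<le>cdim \<Delta>. (-1) ^ i * int (fnum \<Delta> i))"
proof -
  have sizes: "card ` \<Delta> \<subseteq> {..cdim \<Delta>}"
    using assms unfolding cdim_def by auto
  have "(\<Sum>K\<in>\<Delta>. (-1::int) ^ card K) =
      (\<Sum>i\<le>cdim \<Delta>. \<Sum>K\<in>{K \<in> \<Delta>. card K = i}. (-1) ^ card K)"
    by (rule sum.group[OF assms(1) finite_atMost sizes, symmetric])
  also have "\<dots> = (\<Sum>i\<le>cdim \<Delta>. (-1) ^ i * int (fnum \<Delta> i))"
    unfolding fnum_def by (intro sum.cong) auto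
  finally show ?thesis .
qed

lemma cdim_eqI:
  fixes \<Delta> :: "'a set set"
  assumes "finite \<Delta>" "fnum \<Delta> d > 0" "\<And>K. K \<in> \<Delta> \<Longrightarrow> card K \<le> d"
  shows "cdim \<Delta> = d"
proof -
  have "{K \<in> \<Delta>. card K = d} \<noteq> {}"
    using assms(2) unfolding fnum_def by (metis card.empty less_irrefl)
  then show ?thesis
    unfolding cdim_def using assms(1,3) by (intro Max_eqI) auto
qed

lemma hvector_eqI:
  fixes \<Delta> :: "'a set set"
  assumes "cdim \<Delta> = d" "\<And>i. i \<le> d \<Longrightarrow> fnum \<Delta> i = f ! i"
  shows "hvector \<Delta> = map (\<lambda>j. coeff (\<Sum>i\<le>d. of_nat (f ! i) * [:-1, 1:] ^ (d - i)) (d - j)) [0..<d + 1]"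
proof -
  have "hpoly \<Delta> = (\<Sum>i\<le>d. of_nat (f ! i) * [:-1, 1:] ^ (d - i))"
    unfolding hpoly_def assms(1) using assms(2) by (intro sum.cong) auto
  then show ?thesis
    unfolding hvector_def assms(1) by simp
qed


section \<open>Chains as strictly decreasing lists\<close>

definition desc_chain :: "'a set list \<Rightarrow> bool" where
  "desc_chain c \<longleftrightarrow> sorted_wrt (\<lambda>A B. B \<subset> A) c"

lemma desc_chain_Cons: "desc_chain (A # c) \<longleftrightarrow> (\<forall>B\<in>set c. B \<subset> A) \<and> desc_chain c"
  unfolding desc_chain_def by simp

lemma desc_chain_nth_iff:
  assumes "desc_chain L" "i < length L" "j < length L"
  shows "L ! j \<subset> L ! i \<longleftrightarrow> i < j"
  using assms unfolding desc_chain_def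
  by (cases i j rule: linorder_cases) (auto dest: sorted_wrt_nth_less)

lemma desc_chain_distinct: "desc_chain c \<Longrightarrow> distinct c"
  by (induction c) (auto simp: desc_chain_Cons)

lemma desc_chain_comparable: "desc_chain c \<Longrightarrow> A \<in> set c \<Longrightarrow> B \<in> set c \<Longrightarrow> A \<subseteq> B \<or> B \<subseteq> A"
  by (metis desc_chain_nth_iff in_set_conv_nth linorder_neqE_nat order.refl psubset_imp_subset)

lemma desc_chain_unique: "desc_chain c \<Longrightarrow> desc_chain c' \<Longrightarrow> set c = set c' \<Longrightarrow> c = c'"
proof (induction c arbitrary: c')
  case Nil then show ?case by simp
next
  case (Cons A c)
  then obtain A' c'' where c': "c' = A' # c''" by (cases c') auto
  have A: "\<forall>B\<in>set c. B \<subset> A" "desc_chain c" and A': "\<forall>B\<in>set c''. B \<subset> A'" "desc_chain c''"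
    using Cons.prems(1,2) c' by (auto simp: desc_chain_Cons)
  have "A = A'"
  proof (rule ccontr)
    assume "A \<noteq> A'"
    then have "A \<in> set c''" "A' \<in> set c" using Cons.prems(3) c' by auto
    then show False using A(1) A'(1) by auto
  qed
  have "insert A (set c) = insert A (set c'')"
    using Cons.prems(3) c' \<open>A = A'\<close> by simp
  moreover have "A \<notin> set c" "A \<notin> set c''"
    using A(1) A'(1) \<open>A = A'\<close> by auto
  ultimately have "set c = set c''"
    by (metis Diff_insert_absorb)
  then show ?case
    using Cons.IH A(2) A'(2) c' \<open>A = A'\<close> by simp
qed

lemma inj_on_set_desc_chains: "(\<And>c. c \<in> set G \<Longrightarrow> desc_chain c) \<Longrightarrow> inj_on set (set G)"
  by (meson inj_onI desc_chain_unique)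

lemma desc_chain_consecutive_iff:
  assumes L: "desc_chain L"
  shows "(B, A) \<in> set (zip L (tl L)) \<longleftrightarrow>
    A \<in> set L \<and> B \<in> set L \<and> A \<subset> B \<and> (\<forall>X\<in>set L. \<not> (A \<subset> X \<and> X \<subset> B))"
proof
  assume "(B, A) \<in> set (zip L (tl L))"
  then obtain i where i: "Suc i < length L" "B = L ! i" "A = L ! Suc i"
    by (fastforce simp: set_zip nth_tl less_diff_conv)
  have "A \<in> set L" "B \<in> set L"
    using i by auto
  moreover have "A \<subset> B"
    using desc_chain_nth_iff[OF L, of i "Suc i"] i by simp
  moreover have "\<not> (A \<subset> X \<and> X \<subset> B)" if "X \<in> set L" for X
  proof -
    obtain m where m: "m < length L" "X = L ! m"
      using \<open>X \<in> set L\<close> by (metis in_set_conv_nth)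
    then show ?thesis
      using desc_chain_nth_iff[OF L m(1), of "Suc i"] desc_chain_nth_iff[OF L _ m(1), of i] i by auto
  qed
  ultimately show "A \<in> set L \<and> B \<in> set L \<and> A \<subset> B \<and> (\<forall>X\<in>set L. \<not> (A \<subset> X \<and> X \<subset> B))"
    by blast
next
  assume "A \<in> set L \<and> B \<in> set L \<and> A \<subset> B \<and> (\<forall>X\<in>set L. \<not> (A \<subset> X \<and> X \<subset> B))"
  then obtain a b where ab: "a < length L" "b < length L" "A = L ! a" "B = L ! b" "A \<subset> B"
    and between: "\<forall>X\<in>set L. \<not> (A \<subset> X \<and> X \<subset> B)"
    by (metis in_set_conv_nth)
  have "b < a" using desc_chain_nth_iff[OF L ab(2,1)] ab by simp
  have "a = Suc b"
  proof (rule ccontr)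
    assume "a \<noteq> Suc b"
    then have "Suc b < a" using \<open>b < a\<close> by simp
    then have "A \<subset> L ! Suc b" "L ! Suc b \<subset> B"
      using desc_chain_nth_iff[OF L] ab by auto
    then show False using between \<open>Suc b < a\<close> ab(1) by simp
  qed
  then show "(B, A) \<in> set (zip L (tl L))"
    using ab by (auto simp: set_zip nth_tl)
qed


section \<open>Enumerating the faces of a coloring complex\<close>

definition proper_subsets :: "nat set \<Rightarrow> nat set list" where
  "proper_subsets S = filter (\<lambda>T. T \<noteq> {} \<and> T \<noteq> S) (map set (subseqs (sorted_list_of_set S)))"

lemma set_proper_subsets: "finite S \<Longrightarrow> set (proper_subsets S) = {T. T \<noteq> {} \<and> T \<subset> S}"
  unfolding proper_subsets_def using subseqs_powset[of "sorted_list_of_set S"]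
  by (auto simp: image_iff)

lemma distinct_proper_subsets: "finite S \<Longrightarrow> distinct (proper_subsets S)"
  unfolding proper_subsets_def by (intro distinct_filter distinct_set_subseqs) simp

fun chain_lists :: "nat \<Rightarrow> nat set \<Rightarrow> nat set list list" where
  "chain_lists 0 S = [[]]"
| "chain_lists (Suc k) S = [] # concat (map (\<lambda>T. map (Cons T) (chain_lists k T)) (proper_subsets S))"

lemma chain_lists_sound:
  "finite S \<Longrightarrow> c \<in> set (chain_lists k S) \<Longrightarrow> desc_chain c \<and> set c \<subseteq> {A. A \<noteq> {} \<and> A \<subset> S}"
proof (induction k arbitrary: S c)
  case 0 then show ?case by (simp add: desc_chain_def)
next
  case (Suc k)
  show ?case
  proof (cases c)
    case Nil then show ?thesis by (simp add: desc_chain_def)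
  next
    case (Cons T c')
    with Suc.prems have T: "T \<noteq> {}" "T \<subset> S" and c': "c' \<in> set (chain_lists k T)"
      by (auto simp: set_proper_subsets)
    have "finite T" using T(2) Suc.prems(1) finite_subset by blast
    from Suc.IH[OF this c'] T show ?thesis using Cons by (auto simp: desc_chain_Cons)
  qed
qed

text \<open>Every chain of nonempty proper subsets of \<open>S\<close> is enumerated; its largest element
  (the union) comes first.\<close>
lemma chain_lists_complete:
  assumes "finite S" "card S \<le> k" "C \<subseteq> {A. A \<noteq> {} \<and> A \<subset> S}"
    and "\<forall>A\<in>C. \<forall>B\<in>C. A \<subseteq> B \<or> B \<subseteq> A"
  shows "\<exists>c\<in>set (chain_lists k S). set c = C"
  using assms
proof (induction k arbitrary: S C)
  case 0
  then show ?case by auto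
next
  case (Suc k)
  show ?case
  proof (cases "C = {}")
    case True then show ?thesis by simp
  next
    case False
    have "C \<subseteq> Pow S" using Suc.prems(3) by auto
    then have "finite C" using Suc.prems(1) by (meson finite_Pow_iff finite_subset)
    define T where "T = \<Union>C"
    have "T \<in> C"
      unfolding T_def using Suc.prems(4) \<open>finite C\<close> False
      by (intro Union_in_chain) (auto simp: subset.chain_def)
    with Suc.prems(3) have T: "T \<noteq> {}" "T \<subset> S" by auto
    have "finite T" "card T \<le> k"
      using T(2) Suc.prems(1,2) psubset_card_mono[OF Suc.prems(1) T(2)] finite_subset by auto
    moreover have "C - {T} \<subseteq> {A. A \<noteq> {} \<and> A \<subset> T}"
      using Suc.prems(3) unfolding T_def by blast
    ultimately obtain c' where c': "c' \<in> set (chain_lists k T)" "set c' = C - {T}"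
      using Suc.IH[of T "C - {T}"] Suc.prems(4) by blast
    then have "T # c' \<in> set (chain_lists (Suc k) S)"
      using T Suc.prems(1) by (auto simp: set_proper_subsets)
    moreover have "set (T # c') = C" using c' \<open>T \<in> C\<close> by auto
    ultimately show ?thesis by blast
  qed
qed

lemma distinct_concat_map_Cons:
  "distinct xs \<Longrightarrow> (\<And>x. x \<in> set xs \<Longrightarrow> distinct (f x)) \<Longrightarrow>
     distinct (concat (map (\<lambda>x. map (Cons x) (f x)) xs))"
  by (induction xs) (auto simp: distinct_map)

lemma distinct_chain_lists: "finite S \<Longrightarrow> distinct (chain_lists k S)"
proof (induction k arbitrary: S)
  case 0 then show ?case by simp
next
  case (Suc k)
  have "finite T" if "T \<in> set (proper_subsets S)" for T
  proof -
    have "T \<subseteq> S" using that set_proper_subsets[OF Suc.prems] by auto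
    then show ?thesis using Suc.prems by (rule finite_subset)
  qed
  then show ?case
    using distinct_concat_map_Cons[OF distinct_proper_subsets[OF Suc.prems]] Suc.IH by auto
qed

definition has_edge :: "nat set set \<Rightarrow> nat set \<Rightarrow> bool" where
  "has_edge E B \<longleftrightarrow> (\<exists>e\<in>E. e \<subseteq> B)"

definition splits_edge :: "nat set set \<Rightarrow> nat set \<Rightarrow> nat set list \<Rightarrow> bool" where
  "splits_edge E S c \<longleftrightarrow>
     (let L = S # c @ [{}] in \<exists>(B, A)\<in>set (zip L (tl L)). has_edge E (B - A))"

lemma splits_edge_Nil: "splits_edge E S [] \<longleftrightarrow> has_edge E S"
  unfolding splits_edge_def by simp

lemma splits_edge_Cons: "splits_edge E S (T # c) \<longleftrightarrow> has_edge E (S - T) \<or> splits_edge E T c"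
  unfolding splits_edge_def by simp

lemma splits_edge_has_edge:
  assumes "splits_edge E S c" "\<forall>X\<in>set c. X \<subseteq> S"
  shows "has_edge E S"
proof -
  let ?L = "S # c @ [{}]"
  obtain B A where "(B, A) \<in> set (zip ?L (tl ?L))" "has_edge E (B - A)"
    using assms(1) unfolding splits_edge_def by auto
  moreover have "B \<subseteq> S"
    using set_zip_leftD[OF calculation(1)] assms(2) by auto
  ultimately show ?thesis
    unfolding has_edge_def by blast
qed

definition face_list :: "nat \<Rightarrow> nat set set \<Rightarrow> nat set list list" where
  "face_list n E = filter (splits_edge E {1..n}) (chain_lists n {1..n})"

text \<open>For decreasing lists the face condition of the coloring complex is \<open>splits_edge\<close>:
  the covering pairs of \<open>[n] \<supset> A\<^sub>1 \<supset> \<dots> \<supset> {}\<close> are its consecutive entries.\<close>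
lemma coloring_complex_desc_chain_iff:
  assumes "n > 0" "desc_chain c" and c_sub: "set c \<subseteq> {A. A \<noteq> {} \<and> A \<subset> {1..n}}"
  shows "set c \<in> coloring_complex n E \<longleftrightarrow> splits_edge E {1..n} c"
proof -
  define L where "L = {1..n} # c @ [{}]"
  have L: "desc_chain L"
    using assms unfolding L_def desc_chain_def by (auto simp: sorted_wrt_append)
  have set_L: "set c \<union> {{}, {1..n}} = set L"
    unfolding L_def by auto
  have comparable: "\<forall>A\<in>set c. \<forall>B\<in>set c. A \<subseteq> B \<or> B \<subseteq> A"
    using desc_chain_comparable[OF assms(2)] by blast
  have "set c \<in> coloring_complex n E \<longleftrightarrow>
      (\<exists>A\<in>set L. \<exists>B\<in>set L. A \<subset> B \<and> (\<forall>X\<in>set L. \<not> (A \<subset> X \<and> X \<subset> B)) \<and> has_edge E (B - A))"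
    unfolding coloring_complex_def mem_Collect_eq Let_def set_L has_edge_def
    using c_sub comparable by blast
  also have "\<dots> \<longleftrightarrow> (\<exists>B A. (B, A) \<in> set (zip L (tl L)) \<and> has_edge E (B - A))"
    unfolding desc_chain_consecutive_iff[OF L] by blast
  also have "\<dots> \<longleftrightarrow> splits_edge E {1..n} c"
    unfolding splits_edge_def L_def Let_def by auto
  finally show ?thesis .
qed

lemma coloring_complex_face_list:
  assumes "n > 0"
  shows "coloring_complex n E = set ` set (face_list n E)"
    and "distinct (face_list n E)" "\<And>c. c \<in> set (face_list n E) \<Longrightarrow> desc_chain c"
proof -
  have fin: "finite {1..n::nat}" by simp
  show "distinct (face_list n E)"
    unfolding face_list_def using distinct_chain_lists[OF fin] by simp
  show desc: "\<And>c. c \<in> set (face_list n E) \<Longrightarrow> desc_chain c"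
    unfolding face_list_def using chain_lists_sound[OF fin] by auto
  show "coloring_complex n E = set ` set (face_list n E)"
  proof (intro set_eqI iffI)
    fix C assume C: "C \<in> coloring_complex n E"
    then have sub: "C \<subseteq> {A. A \<noteq> {} \<and> A \<subset> {1..n}}"
      and comparable: "\<forall>A\<in>C. \<forall>B\<in>C. A \<subseteq> B \<or> B \<subseteq> A"
      unfolding coloring_complex_def by blast+
    obtain c where c: "c \<in> set (chain_lists n {1..n})" "set c = C"
      using chain_lists_complete[OF fin _ sub comparable] by auto
    have "splits_edge E {1..n} c"
      using coloring_complex_desc_chain_iff[OF assms] chain_lists_sound[OF fin c(1)] C c(2) by blast
    then show "C \<in> set ` set (face_list n E)"
      using c unfolding face_list_def by auto
  next
    fix C assume "C \<in> set ` set (face_list n E)"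
    then obtain c where c: "c \<in> set (chain_lists n {1..n})" "splits_edge E {1..n} c" "C = set c"
      unfolding face_list_def by auto
    then show "C \<in> coloring_complex n E"
      using coloring_complex_desc_chain_iff[OF assms] chain_lists_sound[OF fin c(1)] by blast
  qed
qed

lemma fnum_set_list:
  assumes "distinct G" "\<And>c. c \<in> set G \<Longrightarrow> desc_chain c"
  shows "fnum (set ` set G) i = length (filter (\<lambda>c. length c = i) G)"
proof -
  let ?G\<^sub>i = "filter (\<lambda>c. length c = i) G"
  have card_set: "card (set c) = length c" if "c \<in> set G" for c
    using distinct_card[OF desc_chain_distinct[OF assms(2)[OF that]]] .
  have "{F \<in> set ` set G. card F = i} = set ` set ?G\<^sub>i"
    using card_set by auto
  moreover have "inj_on set (set ?G\<^sub>i)"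
    using inj_on_set_desc_chains[of G] assms(2) by (auto intro: inj_on_subset)
  ultimately have "fnum (set ` set G) i = card (set ?G\<^sub>i)"
    unfolding fnum_def by (simp add: card_image)
  also have "\<dots> = length ?G\<^sub>i"
    using assms(1) by (intro distinct_card distinct_filter)
  finally show ?thesis .
qed


section \<open>Efficient evaluation and non-facet certificates\<close>

text \<open>A pruned enumeration of the faces: once a difference \<open>S - T\<close> contains an edge,
  every refinement of \<open>T\<close> is a face; if neither \<open>S - T\<close> nor \<open>T\<close> contains an edge,
  no chain below \<open>T\<close> can be completed to a face.\<close>
fun face_lists :: "nat \<Rightarrow> nat set set \<Rightarrow> nat set \<Rightarrow> nat set list list" where
  "face_lists 0 E S = (if has_edge E S then [[]] else [])"
| "face_lists (Suc k) E S = (if has_edge E S then [[]] else []) @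
     concat (map (\<lambda>T. map (Cons T)
       (if has_edge E (S - T) then chain_lists k T
        else if has_edge E T then face_lists k E T else [])) (proper_subsets S))"

lemma face_lists_eq_filter:
  "finite S \<Longrightarrow> face_lists k E S = filter (splits_edge E S) (chain_lists k S)"
proof (induction k arbitrary: S)
  case 0
  then show ?case by (simp add: splits_edge_Nil)
next
  case (Suc k)
  have branch: "filter (splits_edge E S) (map (Cons T) (chain_lists k T)) =
      map (Cons T) (if has_edge E (S - T) then chain_lists k T
                    else if has_edge E T then face_lists k E T else [])"
    if "T \<in> set (proper_subsets S)" for T
  proof -
    have "T \<subseteq> S" using that set_proper_subsets[OF Suc.prems] by auto
    then have T: "finite T" using Suc.prems by (rule finite_subset)
    have no_split: "\<not> splits_edge E T c" if "c \<in> set (chain_lists k T)" "\<not> has_edge E T" for c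
      using splits_edge_has_edge chain_lists_sound[OF T that(1)] that(2) by blast
    show ?thesis
      using Suc.IH[OF T] no_split by (auto simp: filter_map o_def splits_edge_Cons filter_False)
  qed
  show ?case
    by (simp add: filter_concat map_map o_def splits_edge_Nil branch cong: map_cong)
qed

lemma face_list_code: "face_list n E = face_lists n E {1..n}"
  unfolding face_list_def by (simp add: face_lists_eq_filter)

definition larger_face :: "nat set set \<Rightarrow> nat set \<Rightarrow> nat set list \<Rightarrow> nat set list \<Rightarrow> bool" where
  "larger_face E S c d \<longleftrightarrow> desc_chain d \<and> (\<forall>T\<in>set d. T \<noteq> {} \<and> T \<subseteq> S \<and> T \<noteq> S) \<and>
     splits_edge E S d \<and> set c \<subset> set d"

text \<open>Candidate certificates: insert a set \<open>A\<^sub>i\<^sub>+\<^sub>1 \<union> {x}\<close> into a gap \<open>A\<^sub>i \<supset> A\<^sub>i\<^sub>+\<^sub>1\<close> of the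
  chain \<open>S \<supset> A\<^sub>1 \<supset> \<dots> \<supset> A\<^sub>l \<supset> {}\<close>.\<close>
definition one_point_refinements :: "nat set \<Rightarrow> nat set list \<Rightarrow> nat set list list" where
  "one_point_refinements S c = (let L = S # c @ [{}] in
     concat (map (\<lambda>i. map (\<lambda>x. take i c @ [L ! Suc i \<union> {x}] @ drop i c)
       (sorted_list_of_set (L ! i - L ! Suc i))) [0..<length c + 1]))"

lemma larger_face_in_coloring_complex:
  assumes "n > 0" "larger_face E {1..n} c d"
  shows "set d \<in> coloring_complex n E" "set c \<subset> set d"
  using assms coloring_complex_desc_chain_iff[of n d E] unfolding larger_face_def by auto


section \<open>The loose triangle on six vertices\<close>

abbreviation loose_triangle :: "nat set set" where
  "loose_triangle \<equiv> {{1,2,3},{3,4,5},{1,5,6}}"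

abbreviation triangle_complex :: "nat set set set" where
  "triangle_complex \<equiv> coloring_complex 6 loose_triangle"

definition triangle_faces :: "nat set list list" where
  "triangle_faces = face_list 6 loose_triangle"

lemma triangle_faces_sizes:
  "map (\<lambda>i. length (filter (\<lambda>c. length c = i) triangle_faces)) [0..<4] = [1, 36, 108, 72]
   \<and> list_all (\<lambda>c. length c \<le> 3) triangle_faces"
  unfolding triangle_faces_def face_list_code by code_simp

lemma triangle_faces_refinable:
  "list_all (\<lambda>c. length c < 3 \<longrightarrow>
     list_ex (larger_face loose_triangle {1..6} c) (one_point_refinements {1..6} c)) triangle_faces"
  unfolding triangle_faces_def face_list_code by code_simp

lemma triangle_hpoly_coeffs:
  "map (\<lambda>j. coeff (\<Sum>i\<le>3. of_nat ([1, 36, 108, 72] ! i) * [:-1, 1:] ^ (3 - i) :: int poly) (3 - j))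
     [0..<3 + 1] = [1, 33, 39, -1]"
  by code_simp

lemma triangle_faces_props:
  "triangle_complex = set ` set triangle_faces" "distinct triangle_faces"
  "\<And>c. c \<in> set triangle_faces \<Longrightarrow> desc_chain c"
  unfolding triangle_faces_def using coloring_complex_face_list[where n = 6 and E = loose_triangle] by auto

lemma triangle_finite: "finite triangle_complex"
  using triangle_faces_props(1) by simp

lemma triangle_card_set: "c \<in> set triangle_faces \<Longrightarrow> card (set c) = length c"
  using triangle_faces_props(3) by (simp add: distinct_card desc_chain_distinct)

lemma triangle_fnum:
  assumes "i \<le> 3"
  shows "fnum triangle_complex i = [1, 36, 108, 72] ! i"
proof -
  have "fnum triangle_complex i = length (filter (\<lambda>c. length c = i) triangle_faces)"
    unfolding triangle_faces_props(1) by (rule fnum_set_list[OF triangle_faces_props(2,3)])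
  also have "\<dots> = map (\<lambda>i. length (filter (\<lambda>c. length c = i) triangle_faces)) [0..<4] ! i"
    using assms by simp
  finally show ?thesis
    using triangle_faces_sizes by simp
qed

lemma triangle_face_card: "K \<in> triangle_complex \<Longrightarrow> card K \<le> 3"
  using triangle_faces_sizes triangle_card_set
  unfolding triangle_faces_props(1) by (auto simp: list_all_iff)

lemma triangle_cdim: "cdim triangle_complex = 3"
  using triangle_fnum[of 3] triangle_face_card unfolding triangle_faces_props(1)
  by (intro cdim_eqI) auto

lemma triangle_facet_card:
  assumes F: "F \<in> facets triangle_complex"
  shows "finite F \<and> card F = 3"
proof -
  obtain c where c: "c \<in> set triangle_faces" "F = set c"
    using F triangle_faces_props(1) unfolding facets_def by auto
  have "\<not> length c < 3"
  proof
    assume "length c < 3"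
    then obtain d where "larger_face loose_triangle {1..6} c d"
      using triangle_faces_refinable c(1) by (auto simp: list_all_iff list_ex_iff)
    then have "set d \<in> triangle_complex" "F \<subset> set d"
      using larger_face_in_coloring_complex[of 6] c(2) by auto
    then show False using F unfolding facets_def by blast
  qed
  then show ?thesis
    using triangle_face_card[of F] F c triangle_card_set unfolding facets_def by auto
qed

lemma triangle_alternating_sum: "(\<Sum>K\<in>triangle_complex. (-1::int) ^ card K) = 1"
proof -
  have "triangle_complex \<noteq> {}"
    using triangle_fnum[of 0] unfolding fnum_def by auto
  with triangle_finite have "(\<Sum>K\<in>triangle_complex. (-1::int) ^ card K) =
      (\<Sum>i\<le>cdim triangle_complex. (-1) ^ i * int (fnum triangle_complex i))"
    by (rule alternating_sum_fnum)
  also have "\<dots> = (\<Sum>i\<le>3. (-1) ^ i * int ([1, 36, 108, 72] ! i))"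
    unfolding triangle_cdim using triangle_fnum by (intro sum.cong) auto
  also have "\<dots> = 1"
    by (simp add: eval_nat_numeral atMost_Suc)
  finally show ?thesis .
qed

theorem mainTheorem10:
  shows "hvector (coloring_complex 6 {{1,2,3},{3,4,5},{1,5,6}}) = [1, 33, 39, -1]
    \<and> (\<exists>n E. uniform_hypergraph n E \<and>
         (\<exists>x\<in>set (hvector (coloring_complex n E)). x < 0) \<and>
         \<not> partitionable (coloring_complex n E))"
proof -
  have hvec: "hvector triangle_complex = [1, 33, 39, -1]"
    using hvector_eqI[OF triangle_cdim triangle_fnum] triangle_hpoly_coeffs by simp
  then have negative: "\<exists>x\<in>set (hvector triangle_complex). x < 0"
    by simp
  have uniform: "uniform_hypergraph 6 loose_triangle"
    unfolding uniform_hypergraph_def hypergraph_def by (intro conjI exI[of _ 3]) auto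
  have not_partitionable: "\<not> partitionable triangle_complex"
  proof
    assume "partitionable triangle_complex"
    then have "(-1) ^ 3 * (\<Sum>K\<in>triangle_complex. (-1::int) ^ card K) \<ge> 0"
      using triangle_finite triangle_facet_card by (rule partitionable_pure_alternating_sum_sign)
    then show False
      using triangle_alternating_sum by simp
  qed
  show ?thesis
    using hvec uniform negative not_partitionable by blast
qed

end
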